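(* Let $k\in\mathbb{R}$, let $\upsilon$ be a multiplier system of weight $k$, and suppose $V$ is a finite-dimensional subspace of the space of moderate-growth holomorphic functions on $\mathbb{H}$ which is invariant under the action $f\mapsto f|_k^\upsilon\gamma$ of $\Gamma$. If $\{f_1,\dots,f_n\}$ is a spanning set for $V$, then there is a representation $\rho:\Gamma\to GL_n(\mathbb{C})$ such that $F=(f_1,\dots,f_n)^t$ satisfies $F|_k^\upsilon\gamma=\rho(\gamma)F$ for all $\gamma\in\Gamma$, i.e. $F\in\mathcal{H}(k,\rho,\upsilon)$.
   Context: $\Gamma=SL(2,\mathbb{Z})$ acts on the upper half-plane $\mathbb{H}$ by Möbius transformations. Complex powers use the principal branch of $\log$. A multiplier system of weight $k$ is a map $\upsilon:\Gamma\to\{|w|=1\}$ such that $\nu(\gamma,z)=\upsilon(\gamma)(cz+d)^k$ ($\gamma=\begin{pmatrix}a&b\\c&d\end{pmatrix}$) satisfies $\nu(\gamma\sigma,z)=\nu(\gamma,\sigma z)\nu(\sigma,z)$. Slash: $(f|_k^\upsilon\gamma)(z)=\upsilon(\gamma)^{-1}(cz+d)^{-k}f(\gamma z)$, applied componentwise to vectors. Moderate growth: $|f(x+iy)|\le y^N$ for $y>c$, some $N,c>0$. $\mathcal{H}(k,\rho,\upsilon)$: column vectors of holomorphic moderate-growth functions $F$ with $F|_k^\upsilon\gamma=\rho(\gamma)F$ for all $\gamma$. *)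

theory Defs
  imports "HOL-Analysis.Analysis"
begin

text \<open>Elements of SL(2,Z) are encoded as quadruples (a,b,c,d) standing for the
  matrix with rows (a b) and (c d).\<close>
type_synonym sl2 = "int \<times> int \<times> int \<times> int"

definition SL2Z :: "sl2 set" where
  "SL2Z = {(a,b,c,d). a * d - b * c = 1}"

fun sl2_mult :: "sl2 \<Rightarrow> sl2 \<Rightarrow> sl2" where
  "sl2_mult (a,b,c,d) (a',b',c',d') =
     (a*a' + b*c', a*b' + b*d', c*a' + d*c', c*b' + d*d')"

definition upper_half_plane :: "complex set" where
  "upper_half_plane = {z. Im z > 0}"

fun moebius :: "sl2 \<Rightarrow> complex \<Rightarrow> complex" where
  "moebius (a,b,c,d) z = (of_int a * z + of_int b) / (of_int c * z + of_int d)"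

text \<open>The automorphy factor (cz+d)^s, principal branch (complex powr uses the principal Ln).\<close>
fun aut_pow :: "sl2 \<Rightarrow> complex \<Rightarrow> real \<Rightarrow> complex" where
  "aut_pow (a,b,c,d) z s = (of_int c * z + of_int d) powr (complex_of_real s)"

definition multiplier_system :: "real \<Rightarrow> (sl2 \<Rightarrow> complex) \<Rightarrow> bool" where
  "multiplier_system k v \<longleftrightarrow>
     (\<forall>g\<in>SL2Z. cmod (v g) = 1) \<and>
     (\<forall>g\<in>SL2Z. \<forall>s\<in>SL2Z. \<forall>z\<in>upper_half_plane.
        v (sl2_mult g s) * aut_pow (sl2_mult g s) z k =
        (v g * aut_pow g (moebius s z) k) * (v s * aut_pow s z k))"

definition slash :: "real \<Rightarrow> (sl2 \<Rightarrow> complex) \<Rightarrow> (complex \<Rightarrow> complex) \<Rightarrow> sl2 \<Rightarrow> complex \<Rightarrow> complex" where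
  "slash k v f g z = inverse (v g) * aut_pow g z (- k) * f (moebius g z)"

definition moderate_growth :: "(complex \<Rightarrow> complex) \<Rightarrow> bool" where
  "moderate_growth f \<longleftrightarrow>
     (\<exists>N c. N > 0 \<and> c > 0 \<and> (\<forall>x y. y > c \<longrightarrow> cmod (f (Complex x y)) \<le> y powr N))"

definition representation :: "(sl2 \<Rightarrow> complex ^'n ^'n) \<Rightarrow> bool" where
  "representation \<rho> \<longleftrightarrow>
     (\<forall>g\<in>SL2Z. invertible (\<rho> g)) \<and>
     (\<forall>g\<in>SL2Z. \<forall>s\<in>SL2Z. \<rho> (sl2_mult g s) = \<rho> g ** \<rho> s)"

definition HH :: "real \<Rightarrow> (sl2 \<Rightarrow> complex ^'n ^'n) \<Rightarrow> (sl2 \<Rightarrow> complex) \<Rightarrow> (complex \<Rightarrow> complex ^'n) set" where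
  "HH k \<rho> v = {F. (\<forall>i. (\<lambda>z. F z $ i) holomorphic_on upper_half_plane \<and> moderate_growth (\<lambda>z. F z $ i)) \<and>
       (\<forall>g\<in>SL2Z. \<forall>z\<in>upper_half_plane.
          (\<chi> i. slash k v (\<lambda>w. F w $ i) g z) = \<rho> g *v F z)}"

end

theory Submission
  imports Defs
begin

text \<open>The functions \<open>f\<^sub>i\<close> need not be linearly independent, so the matrices \<open>S(\<gamma>)\<close> with
  \<open>F|\<gamma> = S(\<gamma>) F\<close> are not unique and need not be multiplicative. A maximal linearly
  independent subfamily yields an idempotent matrix \<open>M\<close> with \<open>M F = F\<close> such that \<open>X M\<close> depends
  only on the values \<open>X F(z)\<close>. The normalised matrices \<open>N(\<gamma>) = S(\<gamma>) M\<close> then satisfy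
  \<open>N(\<gamma>\<sigma>) = N(\<gamma>) N(\<sigma>)\<close>, \<open>N(I) = M\<close> and \<open>M N(\<gamma>) = N(\<gamma>) = N(\<gamma>) M\<close>, because slashing is a right
  action commuting with constant matrices. Adding the complementary idempotent gives the
  representation \<open>\<rho>(\<gamma>) = N(\<gamma>) + (1 - M)\<close>, and still \<open>F|\<gamma> = \<rho>(\<gamma>) F\<close> since \<open>(1 - M) F = 0\<close>.\<close>

lemma sl2_mult_SL2Z: "g \<in> SL2Z \<Longrightarrow> s \<in> SL2Z \<Longrightarrow> sl2_mult g s \<in> SL2Z"
  by (cases g; cases s) (auto simp: SL2Z_def algebra_simps)

lemma SL2Z_one: "(1,0,0,1) \<in> SL2Z"
  by (simp add: SL2Z_def)

lemma SL2Z_inverse: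
  assumes "g \<in> SL2Z"
  obtains h where "h \<in> SL2Z" "sl2_mult g h = (1,0,0,1)" "sl2_mult h g = (1,0,0,1)"
proof -
  obtain a b c d where g: "g = (a,b,c,d)" by (cases g)
  show ?thesis
    by (rule that[of "(d,-b,-c,a)"]) (use assms in \<open>auto simp: g SL2Z_def algebra_simps\<close>)
qed

lemma SL2Z_denominator_nonzero:
  assumes "(a,b,c,d) \<in> SL2Z" "z \<in> upper_half_plane"
  shows "of_int c * z + of_int d \<noteq> 0"
proof
  assume zero: "of_int c * z + of_int d = 0"
  have "Im (of_int c * z + of_int d) = of_int c * Im z" by simp
  with zero have "of_int c * Im z = 0" by simp
  with assms(2) have "c = 0" by (simp add: upper_half_plane_def)
  with zero assms(1) show False by (simp add: SL2Z_def)
qed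

lemma moebius_upper_half_plane:
  assumes "g \<in> SL2Z" "z \<in> upper_half_plane"
  shows "moebius g z \<in> upper_half_plane"
proof -
  obtain a b c d where g: "g = (a,b,c,d)" by (cases g)
  have det: "real_of_int a * real_of_int d - real_of_int b * real_of_int c = 1"
    using assms(1) by (simp add: g SL2Z_def flip: of_int_mult of_int_diff)
  have "Im (of_int a * z + of_int b) * Re (of_int c * z + of_int d)
          - Re (of_int a * z + of_int b) * Im (of_int c * z + of_int d) = Im z"
    using det by (simp add: algebra_simps)
  then have "Im (moebius g z) = Im z / (cmod (of_int c * z + of_int d))\<^sup>2"
    by (simp add: g Im_divide')
  moreover have "of_int c * z + of_int d \<noteq> 0"
    using SL2Z_denominator_nonzero assms g by blast
  ultimately show ?thesis
    using assms(2) by (simp add: upper_half_plane_def)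
qed

lemma moebius_sl2_mult:
  assumes "s \<in> SL2Z" "z \<in> upper_half_plane"
  shows "moebius (sl2_mult g s) z = moebius g (moebius s z)"
proof -
  obtain a b c d where g: "g = (a,b,c,d)" by (cases g)
  obtain a' b' c' d' where s: "s = (a',b',c',d')" by (cases s)
  define P D where "P = of_int a' * z + of_int b'" and "D = of_int c' * z + of_int d'"
  have "D \<noteq> 0"
    using SL2Z_denominator_nonzero assms s unfolding D_def by blast
  then have "moebius g (moebius s z) =
      ((of_int a * P + of_int b * D) / D) / ((of_int c * P + of_int d * D) / D)"
    by (simp add: g s P_def[symmetric] D_def[symmetric] add_divide_distrib)
  also have "\<dots> = (of_int a * P + of_int b * D) / (of_int c * P + of_int d * D)"
    using \<open>D \<noteq> 0\<close> by (simp add: divide_divide_eq_right)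
  also have "\<dots> = moebius (sl2_mult g s) z"
    by (simp add: g s P_def D_def algebra_simps)
  finally show ?thesis ..
qed

lemma aut_pow_uminus: "aut_pow g z (- k) = inverse (aut_pow g z k)"
  by (cases g) (simp add: powr_def exp_minus)

lemma aut_pow_one [simp]: "aut_pow (1,0,0,1) z k = 1"
  by (simp add: powr_def)

lemma multiplier_system_one:
  assumes "multiplier_system k v"
  shows "v (1,0,0,1) = 1"
proof -
  have "\<i> \<in> upper_half_plane" by (simp add: upper_half_plane_def)
  then have "v (1,0,0,1) = v (1,0,0,1) * v (1,0,0,1)"
    using assms SL2Z_one unfolding multiplier_system_def by fastforce
  moreover have "v (1,0,0,1) \<noteq> 0"
    using assms SL2Z_one unfolding multiplier_system_def by force
  ultimately show ?thesis by simp
qed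

lemma slash_one:
  assumes "multiplier_system k v"
  shows "slash k v f (1,0,0,1) z = f z"
  using multiplier_system_one[OF assms] by (simp add: slash_def aut_pow_uminus)

lemma slash_sl2_mult:
  assumes "multiplier_system k v" "g \<in> SL2Z" "s \<in> SL2Z" "z \<in> upper_half_plane"
  shows "slash k v (slash k v f g) s z = slash k v f (sl2_mult g s) z"
proof -
  have "v (sl2_mult g s) * aut_pow (sl2_mult g s) z k =
        (v g * aut_pow g (moebius s z) k) * (v s * aut_pow s z k)"
    using assms unfolding multiplier_system_def by blast
  then have "inverse (v (sl2_mult g s) * aut_pow (sl2_mult g s) z k) =
        inverse ((v g * aut_pow g (moebius s z) k) * (v s * aut_pow s z k))"
    by simp
  then show ?thesis
    by (simp add: slash_def aut_pow_uminus moebius_sl2_mult[OF assms(3,4)]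
        inverse_mult_distrib mult_ac)
qed

lemma slash_cong:
  assumes "\<And>w. w \<in> upper_half_plane \<Longrightarrow> f w = h w" "g \<in> SL2Z" "z \<in> upper_half_plane"
  shows "slash k v f g z = slash k v h g z"
  using assms moebius_upper_half_plane by (simp add: slash_def)

definition vec_slash ::
    "real \<Rightarrow> (sl2 \<Rightarrow> complex) \<Rightarrow> (complex \<Rightarrow> complex ^'n) \<Rightarrow> sl2 \<Rightarrow> complex \<Rightarrow> complex ^'n"
  where "vec_slash k v F g z = (\<chi> i. slash k v (\<lambda>w. F w $ i) g z)"

lemma vec_slash_one:
  assumes "multiplier_system k v"
  shows "vec_slash k v F (1,0,0,1) z = F z"
  by (simp add: vec_slash_def slash_one[OF assms] vec_eq_iff)

lemma vec_slash_sl2_mult: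
  assumes "multiplier_system k v" "g \<in> SL2Z" "s \<in> SL2Z" "z \<in> upper_half_plane"
  shows "vec_slash k v (vec_slash k v F g) s z = vec_slash k v F (sl2_mult g s) z"
  using slash_sl2_mult[OF assms] by (simp add: vec_slash_def vec_eq_iff)

lemma vec_slash_cong:
  assumes "\<And>w. w \<in> upper_half_plane \<Longrightarrow> F w = G w" "g \<in> SL2Z" "z \<in> upper_half_plane"
  shows "vec_slash k v F g z = vec_slash k v G g z"
proof -
  have "slash k v (\<lambda>w. F w $ i) g z = slash k v (\<lambda>w. G w $ i) g z" for i
    by (rule slash_cong) (use assms in auto)
  then show ?thesis
    by (simp add: vec_slash_def)
qed

lemma vec_slash_matrix_vector_mult:
  "vec_slash k v (\<lambda>w. A *v F w) g z = A *v vec_slash k v F g z"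
  by (simp add: vec_slash_def slash_def matrix_vector_mult_def vec_eq_iff sum_distrib_left mult_ac)

definition coords_independent_on :: "'a set \<Rightarrow> ('a \<Rightarrow> 'b::field ^'n) \<Rightarrow> 'n set \<Rightarrow> bool" where
  "coords_independent_on A F B \<longleftrightarrow>
     (\<forall>c. (\<forall>z\<in>A. (\<Sum>l\<in>B. c l * F z $ l) = 0) \<longrightarrow> (\<forall>l\<in>B. c l = 0))"

lemma coords_independent_on_unique:
  assumes "coords_independent_on A F B" "l \<in> B"
    and "\<And>z. z \<in> A \<Longrightarrow> (\<Sum>l\<in>B. c l * F z $ l) = (\<Sum>l\<in>B. d l * F z $ l)"
  shows "c l = d l"
proof -
  have "\<forall>z\<in>A. (\<Sum>l\<in>B. (c l - d l) * F z $ l) = 0"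
    using assms(3) by (simp add: left_diff_distrib sum_subtractf)
  then show ?thesis
    using assms(1,2) unfolding coords_independent_on_def by fastforce
qed

lemma coords_independent_on_insert:
  assumes indep: "coords_independent_on A F B" and "j \<notin> B"
    and dep: "\<not> coords_independent_on A F (insert j B)"
    and fin: "finite B"
  obtains a where "\<And>z. z \<in> A \<Longrightarrow> F z $ j = (\<Sum>l\<in>B. a l * F z $ l)"
proof -
  from dep obtain c where rel: "\<forall>z\<in>A. (\<Sum>l\<in>insert j B. c l * F z $ l) = 0"
    and nontriv: "\<exists>l\<in>insert j B. c l \<noteq> 0"
    unfolding coords_independent_on_def by blast
  have rel': "c j * F z $ j + (\<Sum>l\<in>B. c l * F z $ l) = 0" if "z \<in> A" for z
    using rel that \<open>j \<notin> B\<close> fin by simp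
  have "c j \<noteq> 0"
  proof
    assume "c j = 0"
    with rel' have "\<forall>z\<in>A. (\<Sum>l\<in>B. c l * F z $ l) = 0" by simp
    with indep have "\<forall>l\<in>B. c l = 0" unfolding coords_independent_on_def by blast
    with nontriv \<open>c j = 0\<close> show False by blast
  qed
  show ?thesis
  proof (rule that[of "\<lambda>l. - c l / c j"])
    fix z assume "z \<in> A"
    with rel' have "F z $ j = - (\<Sum>l\<in>B. c l * F z $ l) / c j"
      using \<open>c j \<noteq> 0\<close> by (simp add: field_simps add_eq_0_iff)
    then show "F z $ j = (\<Sum>l\<in>B. - c l / c j * F z $ l)"
      by (simp add: sum_divide_distrib sum_negf)
  qed
qed

lemma spanning_coords_independent_on_exists:
  fixes F :: "'a \<Rightarrow> 'b::field ^'n::finite"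
  obtains B a where "coords_independent_on A F B"
    and "\<And>j z. z \<in> A \<Longrightarrow> F z $ j = (\<Sum>l\<in>B. a j l * F z $ l)"
proof -
  let ?sizes = "card ` {B. coords_independent_on A F B}"
  have "coords_independent_on A F {}"
    by (simp add: coords_independent_on_def)
  then have "Max ?sizes \<in> ?sizes"
    by (intro Max_in) auto
  then obtain B where indep: "coords_independent_on A F B" and "card B = Max ?sizes"
    by auto
  then have max: "card B' \<le> card B" if "coords_independent_on A F B'" for B'
    using that by simp
  have "\<exists>a. \<forall>z\<in>A. F z $ j = (\<Sum>l\<in>B. a l * F z $ l)" for j
  proof (cases "j \<in> B")
    case True
    have "F z $ j = (\<Sum>l\<in>B. (if l = j then 1 else 0) * F z $ l)" for z
      using True by (simp add: if_distrib[of "\<lambda>x. x * _"] cong: if_cong)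
    then show ?thesis
      by (intro exI[of _ "\<lambda>l. if l = j then 1 else 0"]) blast
  next
    case False
    then have "\<not> coords_independent_on A F (insert j B)"
      using max[of "insert j B"] by (auto simp: card_insert_disjoint)
    then show ?thesis
      using coords_independent_on_insert[OF indep False] by (metis finite)
  qed
  then obtain a where "\<And>j. \<forall>z\<in>A. F z $ j = (\<Sum>l\<in>B. a j l * F z $ l)"
    by metis
  with indep show ?thesis using that by blast
qed

lemma projection_onto_span_of_values_exists:
  fixes F :: "'a \<Rightarrow> 'b::field ^'n::finite"
  obtains M :: "'b ^'n ^'n" where "\<And>z. z \<in> A \<Longrightarrow> M *v F z = F z"
    and "\<And>X Y :: 'b ^'n ^'n. (\<And>z. z \<in> A \<Longrightarrow> X *v F z = Y *v F z) \<Longrightarrow> X ** M = Y ** M"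
proof -
  obtain B a where indep: "coords_independent_on A F B"
    and a: "\<And>j z. z \<in> A \<Longrightarrow> F z $ j = (\<Sum>l\<in>B. a j l * F z $ l)"
    using spanning_coords_independent_on_exists[of A F] by blast
  define M :: "'b ^'n ^'n" where "M = (\<chi> j l. if l \<in> B then a j l else 0)"
  have restrict: "(\<Sum>l\<in>UNIV. (if l \<in> B then c l else 0) * y l) = (\<Sum>l\<in>B. c l * y l)"
    for c y :: "'n \<Rightarrow> 'b"
  proof -
    have "(\<Sum>l\<in>UNIV. (if l \<in> B then c l else 0) * y l) =
        (\<Sum>l\<in>UNIV. if l \<in> B then c l * y l else 0)"
      by (rule sum.cong) auto
    then show ?thesis
      by (simp add: sum.inter_restrict[symmetric])
  qed
  have expand: "(X *v F z) $ i = (\<Sum>l\<in>B. (\<Sum>j\<in>UNIV. X $ i $ j * a j l) * F z $ l)"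
    if "z \<in> A" for X :: "'b ^'n ^'n" and z i
  proof -
    have "(X *v F z) $ i = (\<Sum>j\<in>UNIV. X $ i $ j * F z $ j)"
      by (simp add: matrix_vector_mult_def)
    also have "\<dots> = (\<Sum>j\<in>UNIV. X $ i $ j * (\<Sum>l\<in>B. a j l * F z $ l))"
      \<comment> \<open>\<open>a\<close> cannot be handed to the simplifier: its right-hand side contains \<open>F z $ l\<close> again\<close>
      by (intro sum.cong refl) (subst a[OF that], rule refl)
    also have "\<dots> = (\<Sum>j\<in>UNIV. \<Sum>l\<in>B. X $ i $ j * (a j l * F z $ l))"
      by (simp add: sum_distrib_left)
    also have "\<dots> = (\<Sum>l\<in>B. (\<Sum>j\<in>UNIV. X $ i $ j * a j l) * F z $ l)"
      by (subst sum.swap) (simp add: sum_distrib_right mult.assoc)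
    finally show ?thesis .
  qed
  show ?thesis
  proof
    show "M *v F z = F z" if "z \<in> A" for z
    proof -
      have "(M *v F z) $ j = F z $ j" for j
      proof -
        have "(M *v F z) $ j = (\<Sum>l\<in>B. a j l * F z $ l)"
          by (simp add: M_def matrix_vector_mult_def restrict)
        also have "\<dots> = F z $ j"
          using a[OF that] by metis
        finally show ?thesis .
      qed
      then show ?thesis
        by (simp add: vec_eq_iff)
    qed
  next
    fix X Y :: "'b ^'n ^'n"
    assume XY: "\<And>z. z \<in> A \<Longrightarrow> X *v F z = Y *v F z"
    have "(\<Sum>j\<in>UNIV. X $ i $ j * a j l) = (\<Sum>j\<in>UNIV. Y $ i $ j * a j l)"
      if "l \<in> B" for i l
    proof (rule coords_independent_on_unique[OF indep that])
      fix z assume "z \<in> A"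
      then show "(\<Sum>l\<in>B. (\<Sum>j\<in>UNIV. X $ i $ j * a j l) * F z $ l) =
                 (\<Sum>l\<in>B. (\<Sum>j\<in>UNIV. Y $ i $ j * a j l) * F z $ l)"
        by (simp only: expand[OF \<open>z \<in> A\<close>, symmetric] XY[OF \<open>z \<in> A\<close>])
    qed
    moreover have "(Z ** M) $ i $ l = (if l \<in> B then (\<Sum>j\<in>UNIV. Z $ i $ j * a j l) else 0)"
      for Z :: "'b ^'n ^'n" and i l
      by (cases "l \<in> B") (simp_all add: M_def matrix_matrix_mult_def)
    ultimately show "X ** M = Y ** M"
      by (simp add: vec_eq_iff)
  qed
qed

lemma matrix_add_rdistrib: "(A + B) ** C = A ** C + B ** C"
  by (vector matrix_matrix_mult_def sum.distrib[symmetric] field_simps)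

lemma matrix_diff_ldistrib: "(A :: 'a::ring_1 ^'n ^'m) ** (B - C) = A ** B - A ** C"
  by (vector matrix_matrix_mult_def sum_subtractf[symmetric] right_diff_distrib)

lemma matrix_diff_rdistrib: "((A :: 'a::ring_1 ^'n ^'m) - B) ** C = A ** C - B ** C"
  by (vector matrix_matrix_mult_def sum_subtractf[symmetric] left_diff_distrib)

lemma matrix_mult_add_complement_idempotent:
  fixes M A B :: "'a::ring_1 ^'n ^'n"
  assumes "M ** M = M" "A ** M = A" "M ** B = B"
  shows "(A + (mat 1 - M)) ** (B + (mat 1 - M)) = A ** B + (mat 1 - M)"
  using assms
  by (simp add: matrix_add_ldistrib matrix_add_rdistrib matrix_diff_ldistrib matrix_diff_rdistrib)

lemma representation_add_complement_idempotent:
  fixes N :: "sl2 \<Rightarrow> complex ^'n ^'n"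
  assumes idem: "M ** M = M"
    and right: "\<And>g. g \<in> SL2Z \<Longrightarrow> N g ** M = N g"
    and left: "\<And>g. g \<in> SL2Z \<Longrightarrow> M ** N g = N g"
    and mult: "\<And>g s. g \<in> SL2Z \<Longrightarrow> s \<in> SL2Z \<Longrightarrow> N (sl2_mult g s) = N g ** N s"
    and one: "N (1,0,0,1) = M"
  shows "representation (\<lambda>g. N g + (mat 1 - M))"
proof -
  let ?\<rho> = "\<lambda>g. N g + (mat 1 - M)"
  have \<rho>_mult: "?\<rho> (sl2_mult g s) = ?\<rho> g ** ?\<rho> s" if "g \<in> SL2Z" "s \<in> SL2Z" for g s
    using matrix_mult_add_complement_idempotent[OF idem right left] mult that by simp
  have "invertible (?\<rho> g)" if g: "g \<in> SL2Z" for g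
  proof -
    obtain h where h: "h \<in> SL2Z" "sl2_mult g h = (1,0,0,1)" "sl2_mult h g = (1,0,0,1)"
      using SL2Z_inverse[OF g] .
    then show ?thesis
      using \<rho>_mult[OF g h(1)] \<rho>_mult[OF h(1) g] one
      unfolding invertible_def by (metis add_diff_cancel_left' diff_add_cancel)
  qed
  with \<rho>_mult show ?thesis
    unfolding representation_def by blast
qed

lemma vec_slash_representation:
  fixes F :: "complex \<Rightarrow> complex ^'n::finite"
  assumes mult: "multiplier_system k v"
    and closed:
      "\<And>g. g \<in> SL2Z \<Longrightarrow> \<exists>S. \<forall>z\<in>upper_half_plane. vec_slash k v F g z = S *v F z"
  obtains \<rho> where "representation \<rho>"
    and "\<And>g z. g \<in> SL2Z \<Longrightarrow> z \<in> upper_half_plane \<Longrightarrow> vec_slash k v F g z = \<rho> g *v F z"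
proof -
  from bchoice[OF ballI[OF closed]] obtain S
    where "\<forall>g\<in>SL2Z. \<forall>z\<in>upper_half_plane. vec_slash k v F g z = S g *v F z" ..
  then have S: "vec_slash k v F g z = S g *v F z" if "g \<in> SL2Z" "z \<in> upper_half_plane" for g z
    using that by blast
  obtain M :: "complex ^'n ^'n" where M_F: "\<And>z. z \<in> upper_half_plane \<Longrightarrow> M *v F z = F z"
    and reduce: "\<And>X Y :: complex ^'n ^'n.
                  (\<And>z. z \<in> upper_half_plane \<Longrightarrow> X *v F z = Y *v F z) \<Longrightarrow> X ** M = Y ** M"
    using projection_onto_span_of_values_exists[of upper_half_plane F] by blast
  define N where "N g = S g ** M" for g
  have N_F: "N g *v F z = vec_slash k v F g z" if "g \<in> SL2Z" "z \<in> upper_half_plane" for g z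
    using that by (simp add: N_def S M_F flip: matrix_vector_mul_assoc)
  have idem: "M ** M = M"
    using reduce[of M "mat 1"] M_F by simp
  have right: "N g ** M = N g" for g
    by (simp add: N_def idem flip: matrix_mul_assoc)
  have left: "M ** N g = N g" if g: "g \<in> SL2Z" for g
  proof -
    have "(M ** N g) *v F z = N g *v F z" if z: "z \<in> upper_half_plane" for z
    proof -
      have "(M ** N g) *v F z = vec_slash k v (\<lambda>w. M *v F w) g z"
        by (simp add: N_F[OF g z] vec_slash_matrix_vector_mult flip: matrix_vector_mul_assoc)
      also have "\<dots> = N g *v F z"
        using vec_slash_cong[OF M_F g z] N_F[OF g z] by simp
      finally show ?thesis .
    qed
    then show ?thesis
      using reduce right by (metis matrix_mul_assoc)
  qed
  have N_mult: "N (sl2_mult g s) = N g ** N s" if g: "g \<in> SL2Z" and s: "s \<in> SL2Z" for g s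
  proof -
    have "N (sl2_mult g s) *v F z = (N g ** N s) *v F z" if z: "z \<in> upper_half_plane" for z
    proof -
      have "N (sl2_mult g s) *v F z = vec_slash k v (vec_slash k v F g) s z"
        using N_F[OF sl2_mult_SL2Z[OF g s] z] vec_slash_sl2_mult[OF mult g s z, where F = F]
        by simp
      also have "\<dots> = vec_slash k v (\<lambda>w. N g *v F w) s z"
        using vec_slash_cong[OF N_F[OF g] s z] by simp
      also have "\<dots> = (N g ** N s) *v F z"
        by (simp add: vec_slash_matrix_vector_mult N_F[OF s z] flip: matrix_vector_mul_assoc)
      finally show ?thesis .
    qed
    then show ?thesis
      using reduce right by (metis matrix_mul_assoc)
  qed
  have "N (1,0,0,1) ** M = M ** M"
    by (rule reduce) (simp add: N_F[OF SL2Z_one] vec_slash_one[OF mult] M_F)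
  then have N_one: "N (1,0,0,1) = M"
    by (simp add: right idem)
  show ?thesis
  proof
    show "representation (\<lambda>g. N g + (mat 1 - M))"
      using representation_add_complement_idempotent[OF idem right left N_mult N_one] .
    show "vec_slash k v F g z = (N g + (mat 1 - M)) *v F z"
      if "g \<in> SL2Z" "z \<in> upper_half_plane" for g z
      using N_F[OF that] M_F[OF that(2)]
      by (simp add: matrix_vector_mult_add_rdistrib matrix_vector_mult_diff_rdistrib)
  qed
qed

theorem proposition2p14:
  fixes k :: real and v :: "sl2 \<Rightarrow> complex"
    and V :: "(complex \<Rightarrow> complex) set"
    and f :: "'n::finite \<Rightarrow> complex \<Rightarrow> complex"
  assumes mult: "multiplier_system k v"
    and V_zero: "(\<lambda>z. 0) \<in> V"
    and V_add: "\<And>g h. g \<in> V \<Longrightarrow> h \<in> V \<Longrightarrow> (\<lambda>z. g z + h z) \<in> V"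
    and V_scale: "\<And>c g. g \<in> V \<Longrightarrow> (\<lambda>z. c * g z) \<in> V"
    and V_holo: "\<And>g. g \<in> V \<Longrightarrow> g holomorphic_on upper_half_plane \<and> moderate_growth g"
    and V_inv: "\<And>g \<gamma>. g \<in> V \<Longrightarrow> \<gamma> \<in> SL2Z \<Longrightarrow>
                   \<exists>h\<in>V. \<forall>z\<in>upper_half_plane. slash k v g \<gamma> z = h z"
    and f_in: "\<And>i. f i \<in> V"
    and f_span: "\<And>g. g \<in> V \<Longrightarrow>
                   \<exists>c :: 'n \<Rightarrow> complex. \<forall>z\<in>upper_half_plane. g z = (\<Sum>i\<in>UNIV. c i * f i z)"
  shows "\<exists>\<rho> :: sl2 \<Rightarrow> complex ^'n ^'n.
           representation \<rho> \<and>
           (\<forall>\<gamma>\<in>SL2Z. \<forall>z\<in>upper_half_plane.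
              (\<chi> i. slash k v (f i) \<gamma> z) = \<rho> \<gamma> *v (\<chi> i. f i z)) \<and>
           (\<lambda>z. \<chi> i. f i z) \<in> HH k \<rho> v"
proof -
  let ?F = "\<lambda>z. \<chi> i. f i z"
  have closed: "\<exists>S. \<forall>z\<in>upper_half_plane. vec_slash k v ?F \<gamma> z = S *v ?F z"
    if "\<gamma> \<in> SL2Z" for \<gamma>
  proof -
    have "\<exists>c. \<forall>z\<in>upper_half_plane. slash k v (f i) \<gamma> z = (\<Sum>j\<in>UNIV. c j * f j z)" for i
      using V_inv[OF f_in that] f_span by fastforce
    then obtain c
      where "\<And>i. \<forall>z\<in>upper_half_plane. slash k v (f i) \<gamma> z = (\<Sum>j\<in>UNIV. c i j * f j z)"
      by metis
    then show ?thesis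
      by (intro exI[of _ "\<chi> i j. c i j"])
        (simp add: vec_slash_def vec_eq_iff matrix_vector_mult_def)
  qed
  obtain \<rho> where "representation \<rho>"
    and "\<And>\<gamma> z. \<gamma> \<in> SL2Z \<Longrightarrow> z \<in> upper_half_plane \<Longrightarrow>
           vec_slash k v ?F \<gamma> z = \<rho> \<gamma> *v ?F z"
    using vec_slash_representation[OF mult closed] by blast
  then show ?thesis
    using V_holo[OF f_in] unfolding HH_def vec_slash_def by (intro exI[of _ \<rho>]) auto
qed

end
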